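(* Let $(r,\alpha,\beta,L,R)$ and $(r',\alpha',\beta',L',R')$ be $(m,n)$-allowed quintuples with $L\,\Pi(\alpha,\beta)\,R=L'\,\Pi(\alpha',\beta')\,R'$. Then $(r,\alpha,\beta,L,R)=(r',\alpha',\beta',L',R')$.
   Context: $\mathbb{F}$ is the field with two elements, $[n]=\{1,\dots,n\}$, $e_{n,i}$ standard basis column vectors, $I_n$ identity. $P_n=\{(i,j):i,j\in[n],i>j\}$; for transitive $T\subseteq P_n$ ($(i,j),(j,k)\in T\Rightarrow(i,k)\in T$), $L_n(T)=I_n+\mathrm{span}_{\mathbb{F}}\{e_{n,i}e_{n,j}^{\top}:(i,j)\in T\}$. $\Pi(\alpha,\beta)=\sum_{i=1}^re_{m,\alpha(i)}e_{n,\beta(i)}^{\top}\in\mathbb{F}^{m\times n}$. For increasing $\alpha:[r]\to[m]$, $T_L(\alpha)=\{(i,j):j\in\mathrm{Im}(\alpha),i>j\}\subseteq P_m$; for injective $\beta:[r]\to[n]$, $T_R(\beta)=\{(i,j):i\in\mathrm{Im}(\beta),j<i,j\notin\{\beta(1),\dots,\beta(\beta^{-1}(i)-1)\}\}$. A quintuple $(r,\alpha,\beta,L,R)$ is $(m,n)$-allowed if $r\le\min(m,n)$, $\alpha:[r]\to[m]$ is increasing, $\beta:[r]\to[n]$ is injective, $L\in L_m(T_L(\alpha))$, $R\in L_n(T_R(\beta))$. *)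

theory Defs
  imports "HOL-Library.Z2" "Jordan_Normal_Form.Matrix"
begin

text \<open>Indices are 0-based: the paper's index set [n] = {1..n} is rendered as {0..<n};
  maps alpha, beta : [r] -> [m] are rendered as lists of length r.\<close>

definition P_set :: "nat \<Rightarrow> (nat \<times> nat) set" where
  "P_set n = {(i, j). i < n \<and> j < n \<and> i > j}"

definition transitive_pos :: "(nat \<times> nat) set \<Rightarrow> bool" where
  "transitive_pos T \<longleftrightarrow> (\<forall>i j k. (i, j) \<in> T \<longrightarrow> (j, k) \<in> T \<longrightarrow> (i, k) \<in> T)"

definition Lgrp :: "nat \<Rightarrow> (nat \<times> nat) set \<Rightarrow> bit mat set" where
  "Lgrp n T = {one_mat n + A | A. A \<in> carrier_mat n n \<and>
      (\<forall>i<n. \<forall>j<n. (i, j) \<notin> T \<longrightarrow> A $$ (i, j) = 0)}"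

definition Pi_mat :: "nat \<Rightarrow> nat \<Rightarrow> nat list \<Rightarrow> nat list \<Rightarrow> bit mat" where
  "Pi_mat m n \<alpha> \<beta> = mat m n (\<lambda>(i, j).
      \<Sum>k<length \<alpha>. (if \<alpha> ! k = i \<and> \<beta> ! k = j then 1 else 0))"

definition T_L :: "nat \<Rightarrow> nat list \<Rightarrow> (nat \<times> nat) set" where
  "T_L m \<alpha> = {(i, j). i < m \<and> j \<in> set \<alpha> \<and> i > j}"

text \<open>T_R(beta) = {(i,j) : i in Im beta, j < i, j not in {beta(1),...,beta(beta^{-1}(i)-1)}};
  with i = beta(k) (0-based position k), the excluded set is the first k entries of beta.\<close>
definition T_R :: "nat list \<Rightarrow> (nat \<times> nat) set" where
  "T_R \<beta> = {(\<beta> ! k, j) | k j. k < length \<beta> \<and> j < \<beta> ! k \<and> j \<notin> set (take k \<beta>)}"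

definition allowed :: "nat \<Rightarrow> nat \<Rightarrow> nat \<Rightarrow> nat list \<Rightarrow> nat list \<Rightarrow> bit mat \<Rightarrow> bit mat \<Rightarrow> bool" where
  "allowed m n r \<alpha> \<beta> L R \<longleftrightarrow>
     r \<le> min m n \<and>
     length \<alpha> = r \<and> set \<alpha> \<subseteq> {0..<m} \<and> sorted_wrt (<) \<alpha> \<and>
     length \<beta> = r \<and> set \<beta> \<subseteq> {0..<n} \<and> distinct \<beta> \<and>
     L \<in> Lgrp m (T_L m \<alpha>) \<and> R \<in> Lgrp n (T_R \<beta>)"

end

theory Submission
  imports Defs
begin

text \<open>Write X = L \<Pi>(\<alpha>,\<beta>) R as the sum over k of the outer products of column \<alpha>(k) of L
  with row \<beta>(k) of R. The allowedness conditions make these factors echelon-shaped: the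
  k-th column has its topmost nonzero entry, a 1, in row \<alpha>(k), and the k-th row has its last
  nonzero entry, a 1, in column \<beta>(k) and vanishes in the earlier pivot columns. Hence the
  first nonzero row of X is \<alpha>(1) and equals row \<beta>(1) of R, whose last nonzero entry is at
  \<beta>(1), and column \<beta>(1) of X is column \<alpha>(1) of L. Subtracting this first term and
  repeating recovers all of r, \<alpha>, \<beta> and the relevant columns of L and rows of R from X; the
  remaining entries of L and R are those of the identity.\<close>

definition tail_sum ::
    "nat \<Rightarrow> (nat \<Rightarrow> nat \<Rightarrow> 'a) \<Rightarrow> (nat \<Rightarrow> nat \<Rightarrow> 'a) \<Rightarrow> nat \<Rightarrow> nat \<Rightarrow> nat \<Rightarrow> 'a::semiring_0"
  where "tail_sum r c v k i j = (\<Sum>q\<in>{k..<r}. c i q * v q j)"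

locale echelon_sum =
  fixes m n r :: nat and a b :: "nat \<Rightarrow> nat"
    and c :: "nat \<Rightarrow> nat \<Rightarrow> 'a::ring_1" and v :: "nat \<Rightarrow> nat \<Rightarrow> 'a"
  assumes pivot_row_less: "k < r \<Longrightarrow> a k < m"
    and pivot_row_strict_mono: "k < k' \<Longrightarrow> k' < r \<Longrightarrow> a k < a k'"
    and pivot_col_less: "k < r \<Longrightarrow> b k < n"
    and c_pivot: "k < r \<Longrightarrow> c (a k) k = 1"
    and c_above_pivot: "k < r \<Longrightarrow> i < a k \<Longrightarrow> c i k = 0"
    and v_pivot: "k < r \<Longrightarrow> v k (b k) = 1"
    and v_right_of_pivot: "k < r \<Longrightarrow> b k < j \<Longrightarrow> j < n \<Longrightarrow> v k j = 0"
    and v_earlier_pivot: "k' < k \<Longrightarrow> k < r \<Longrightarrow> v k (b k') = 0"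
begin

abbreviation tail :: "nat \<Rightarrow> nat \<Rightarrow> nat \<Rightarrow> 'a" where
  "tail \<equiv> tail_sum r c v"

lemma tail_Suc: "k < r \<Longrightarrow> tail k i j = c i k * v k j + tail (Suc k) i j"
  unfolding tail_sum_def by (rule sum.atLeast_Suc_lessThan)

lemma tail_above_pivot_row:
  assumes "k < r" "i < a k" shows "tail k i j = 0"
  unfolding tail_sum_def
proof (intro sum.neutral ballI)
  fix q assume "q \<in> {k..<r}"
  then have "a k \<le> a q" using pivot_row_strict_mono by (cases "k = q") (auto intro: less_imp_le)
  then show "c i q * v q j = 0" using c_above_pivot \<open>q \<in> {k..<r}\<close> assms(2) by simp
qed

lemma tail_pivot_row: "k < r \<Longrightarrow> tail k (a k) j = v k j"
proof -
  assume "k < r"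
  have "tail (Suc k) (a k) j = 0"
    unfolding tail_sum_def
    by (intro sum.neutral ballI) (simp add: c_above_pivot pivot_row_strict_mono)
  then show ?thesis using \<open>k < r\<close> by (simp add: tail_Suc c_pivot)
qed

lemma tail_pivot_col: "k < r \<Longrightarrow> tail k i (b k) = c i k"
proof -
  assume "k < r"
  have "tail (Suc k) i (b k) = 0"
    unfolding tail_sum_def by (intro sum.neutral ballI) (simp add: v_earlier_pivot)
  then show ?thesis using \<open>k < r\<close> by (simp add: tail_Suc v_pivot)
qed

lemma tail_vanishes_iff: "(\<forall>i<m. \<forall>j<n. tail k i j = 0) \<longleftrightarrow> r \<le> k"
proof
  assume "\<forall>i<m. \<forall>j<n. tail k i j = 0"
  then show "r \<le> k"
    using tail_pivot_row[of k "b k"] pivot_row_less[of k] pivot_col_less[of k] v_pivot[of k]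
    by (cases "k < r") auto
qed (simp add: tail_sum_def)

lemma pivot_row_eq_Least:
  assumes "k < r" shows "a k = (LEAST i. i < m \<and> (\<exists>j<n. tail k i j \<noteq> 0))"
proof (rule Least_equality[symmetric])
  show "a k < m \<and> (\<exists>j<n. tail k (a k) j \<noteq> 0)"
    using assms by (auto simp: tail_pivot_row v_pivot intro: pivot_row_less pivot_col_less)
  show "a k \<le> i" if "i < m \<and> (\<exists>j<n. tail k i j \<noteq> 0)" for i
    using that tail_above_pivot_row[OF assms] not_le by blast
qed

lemma pivot_col_eq_Greatest:
  assumes "k < r" shows "b k = (GREATEST j. j < n \<and> v k j \<noteq> 0)"
proof (rule Greatest_equality[symmetric])
  show "b k < n \<and> v k (b k) \<noteq> 0"
    using assms by (simp add: v_pivot pivot_col_less)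
  show "j \<le> b k" if "j < n \<and> v k j \<noteq> 0" for j
    using that v_right_of_pivot[OF assms] not_le by blast
qed

end

lemma echelon_sum_step:
  assumes E: "echelon_sum m n r a b c v" and E': "echelon_sum m n r' a' b' c' v'"
    and "k < r"
    and tails: "\<And>i j. i < m \<Longrightarrow> j < n \<Longrightarrow> tail_sum r c v k i j = tail_sum r' c' v' k i j"
  shows "k < r'" and "a k = a' k" and "b k = b' k"
    and "\<forall>i<m. c i k = c' i k" and "\<forall>j<n. v k j = v' k j"
    and "\<forall>i<m. \<forall>j<n. tail_sum r c v (Suc k) i j = tail_sum r' c' v' (Suc k) i j"
proof -
  interpret E: echelon_sum m n r a b c v by (rule E)
  interpret E': echelon_sum m n r' a' b' c' v' by (rule E')
  show "k < r'"
    using E.tail_vanishes_iff[of k] E'.tail_vanishes_iff[of k] tails \<open>k < r\<close> by auto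
  then show a_eq: "a k = a' k"
    using E.pivot_row_eq_Least[OF \<open>k < r\<close>] E'.pivot_row_eq_Least by (simp add: tails cong: conj_cong)
  show v_eq: "\<forall>j<n. v k j = v' k j"
    using E.tail_pivot_row[OF \<open>k < r\<close>] E'.tail_pivot_row[OF \<open>k < r'\<close>] tails a_eq
      E.pivot_row_less[OF \<open>k < r\<close>] by metis
  then show b_eq: "b k = b' k"
    using E.pivot_col_eq_Greatest[OF \<open>k < r\<close>] E'.pivot_col_eq_Greatest[OF \<open>k < r'\<close>]
    by (simp cong: conj_cong)
  show c_eq: "\<forall>i<m. c i k = c' i k"
    using E.tail_pivot_col[OF \<open>k < r\<close>] E'.tail_pivot_col[OF \<open>k < r'\<close>] tails b_eq
      E.pivot_col_less[OF \<open>k < r\<close>] by metis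
  show "\<forall>i<m. \<forall>j<n. tail_sum r c v (Suc k) i j = tail_sum r' c' v' (Suc k) i j"
    using E.tail_Suc[OF \<open>k < r\<close>] E'.tail_Suc[OF \<open>k < r'\<close>] tails c_eq v_eq by (metis add_left_cancel)
qed

lemma echelon_sum_tails_agree:
  assumes E: "echelon_sum m n r a b c v" and E': "echelon_sum m n r' a' b' c' v'"
    and sums: "\<And>i j. i < m \<Longrightarrow> j < n \<Longrightarrow> (\<Sum>k<r. c i k * v k j) = (\<Sum>k<r'. c' i k * v' k j)"
    and "k \<le> r" and "i < m" and "j < n"
  shows "tail_sum r c v k i j = tail_sum r' c' v' k i j"
  using \<open>k \<le> r\<close> \<open>i < m\<close> \<open>j < n\<close>
proof (induction k arbitrary: i j)
  case 0
  then show ?case using sums by (simp add: tail_sum_def atLeast0LessThan)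
next
  case (Suc k)
  then show ?case using echelon_sum_step(6)[OF E E'] by simp
qed

theorem echelon_sum_unique:
  assumes E: "echelon_sum m n r a b c v" and E': "echelon_sum m n r' a' b' c' v'"
    and sums: "\<And>i j. i < m \<Longrightarrow> j < n \<Longrightarrow> (\<Sum>k<r. c i k * v k j) = (\<Sum>k<r'. c' i k * v' k j)"
  shows "r = r'"
    and "\<And>k. k < r \<Longrightarrow> a k = a' k \<and> b k = b' k \<and> (\<forall>i<m. c i k = c' i k) \<and> (\<forall>j<n. v k j = v' k j)"
proof -
  interpret E: echelon_sum m n r a b c v by (rule E)
  interpret E': echelon_sum m n r' a' b' c' v' by (rule E')
  have "r' \<le> r"
    using echelon_sum_tails_agree[OF E E' sums] E.tail_vanishes_iff[of r] E'.tail_vanishes_iff[of r]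
    by auto
  moreover have "r \<le> r'"
    using echelon_sum_tails_agree[OF E' E sums[symmetric]]
      E.tail_vanishes_iff[of r'] E'.tail_vanishes_iff[of r']
    by auto
  ultimately show "r = r'" by simp
  fix k assume "k < r"
  then show "a k = a' k \<and> b k = b' k \<and> (\<forall>i<m. c i k = c' i k) \<and> (\<forall>j<n. v k j = v' k j)"
    using echelon_sum_step(2-5)[OF E E'] echelon_sum_tails_agree[OF E E' sums] by simp
qed

lemma Lgrp_carrier: "L \<in> Lgrp n T \<Longrightarrow> L \<in> carrier_mat n n"
  unfolding Lgrp_def by auto

lemma Lgrp_entry_notin:
  "L \<in> Lgrp n T \<Longrightarrow> i < n \<Longrightarrow> j < n \<Longrightarrow> (i, j) \<notin> T \<Longrightarrow> L $$ (i, j) = (if i = j then 1 else 0)"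
  unfolding Lgrp_def by auto

lemma Lgrp_entry_upper:
  assumes "L \<in> Lgrp n T" "T \<subseteq> P_set n" "i \<le> j" "j < n"
  shows "L $$ (i, j) = (if i = j then 1 else 0)"
  using assms by (intro Lgrp_entry_notin) (auto simp: P_set_def)

lemma Lgrp_eqI:
  assumes "L \<in> Lgrp n T" "L' \<in> Lgrp n T"
    and "\<And>i j. i < n \<Longrightarrow> j < n \<Longrightarrow> (i, j) \<in> T \<Longrightarrow> L $$ (i, j) = L' $$ (i, j)"
  shows "L = L'"
proof (rule eq_matI)
  show "dim_row L = dim_row L'" "dim_col L = dim_col L'"
    using Lgrp_carrier[OF assms(1)] Lgrp_carrier[OF assms(2)] by auto
  fix i j assume "i < dim_row L'" "j < dim_col L'"
  then have "i < n" "j < n" using Lgrp_carrier[OF assms(2)] by auto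
  then show "L $$ (i, j) = L' $$ (i, j)"
    using assms Lgrp_entry_notin by (cases "(i, j) \<in> T") auto
qed

lemma sum_delta_swap:
  fixes f :: "nat \<Rightarrow> nat \<Rightarrow> 'a::comm_monoid_add"
  assumes "\<And>k. k < r \<Longrightarrow> p k < N"
  shows "(\<Sum>l<N. \<Sum>k<r. if p k = l then f k l else 0) = (\<Sum>k<r. f k (p k))"
  using assms by (subst sum.swap) (auto intro!: sum.cong simp: sum.delta)

lemma mult_Pi_mat_entry:
  assumes "A \<in> carrier_mat m' m" "i < m'" "t < n" "set \<alpha> \<subseteq> {0..<m}"
  shows "(A * Pi_mat m n \<alpha> \<beta>) $$ (i, t) = (\<Sum>k<length \<alpha>. if \<beta> ! k = t then A $$ (i, \<alpha> ! k) else 0)"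
proof -
  have "(A * Pi_mat m n \<alpha> \<beta>) $$ (i, t)
      = (\<Sum>l<m. A $$ (i, l) * (\<Sum>k<length \<alpha>. if \<alpha> ! k = l \<and> \<beta> ! k = t then 1 else 0))"
    using assms(1-3) by (simp add: Pi_mat_def scalar_prod_def lessThan_atLeast0 del: sum_of_bool_eq)
  also have "\<dots> = (\<Sum>l<m. \<Sum>k<length \<alpha>. if \<alpha> ! k = l then (if \<beta> ! k = t then A $$ (i, l) else 0) else 0)"
    unfolding sum_distrib_left by (intro sum.cong refl) simp
  also have "\<dots> = (\<Sum>k<length \<alpha>. if \<beta> ! k = t then A $$ (i, \<alpha> ! k) else 0)"
    using assms(4) by (intro sum_delta_swap) (auto dest: nth_mem)
  finally show ?thesis .
qed

lemma mult_Pi_mat_mult_entry: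
  assumes "A \<in> carrier_mat m' m" "B \<in> carrier_mat n n'" "i < m'" "j < n'"
    and "length \<beta> = length \<alpha>" "set \<alpha> \<subseteq> {0..<m}" "set \<beta> \<subseteq> {0..<n}"
  shows "(A * Pi_mat m n \<alpha> \<beta> * B) $$ (i, j) = (\<Sum>k<length \<alpha>. A $$ (i, \<alpha> ! k) * B $$ (\<beta> ! k, j))"
proof -
  have "(A * Pi_mat m n \<alpha> \<beta> * B) $$ (i, j) = (\<Sum>t<n. (A * Pi_mat m n \<alpha> \<beta>) $$ (i, t) * B $$ (t, j))"
    using assms(1-4) by (simp add: Pi_mat_def scalar_prod_def lessThan_atLeast0)
  also have "\<dots> = (\<Sum>t<n. \<Sum>k<length \<alpha>. if \<beta> ! k = t then A $$ (i, \<alpha> ! k) * B $$ (t, j) else 0)"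
  proof (intro sum.cong refl)
    fix t assume "t \<in> {..<n}"
    then have row: "(A * Pi_mat m n \<alpha> \<beta>) $$ (i, t) = (\<Sum>k<length \<alpha>. if \<beta> ! k = t then A $$ (i, \<alpha> ! k) else 0)"
      using mult_Pi_mat_entry[OF assms(1,3) _ assms(6)] by simp
    show "(A * Pi_mat m n \<alpha> \<beta>) $$ (i, t) * B $$ (t, j)
        = (\<Sum>k<length \<alpha>. if \<beta> ! k = t then A $$ (i, \<alpha> ! k) * B $$ (t, j) else 0)"
      unfolding row sum_distrib_right by (rule sum.cong[OF refl]) simp
  qed
  also have "\<dots> = (\<Sum>k<length \<alpha>. A $$ (i, \<alpha> ! k) * B $$ (\<beta> ! k, j))"
    using assms(5,7) by (intro sum_delta_swap) (metis atLeastLessThan_iff nth_mem subsetD)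
  finally show ?thesis .
qed

lemma T_L_subset_P_set: "T_L m \<alpha> \<subseteq> P_set m"
  by (auto simp: T_L_def P_set_def)

lemma T_R_subset_P_set: "set \<beta> \<subseteq> {0..<n} \<Longrightarrow> T_R \<beta> \<subseteq> P_set n"
  by (fastforce simp: T_R_def P_set_def dest: nth_mem)

lemma T_R_earlier_notin:
  assumes "distinct \<beta>" "k' < k" "k < length \<beta>"
  shows "(\<beta> ! k, \<beta> ! k') \<notin> T_R \<beta>"
proof
  assume "(\<beta> ! k, \<beta> ! k') \<in> T_R \<beta>"
  then obtain q where "q < length \<beta>" "\<beta> ! k = \<beta> ! q" "\<beta> ! k' \<notin> set (take q \<beta>)"
    unfolding T_R_def by auto
  moreover have "\<beta> ! k' \<in> set (take k \<beta>)"
    using assms(2,3) by (auto simp: in_set_conv_nth)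
  ultimately show False
    using assms by (simp add: nth_eq_iff_index_eq)
qed

lemma allowed_echelon_sum:
  assumes "allowed m n r \<alpha> \<beta> L R"
  shows "echelon_sum m n r ((!) \<alpha>) ((!) \<beta>) (\<lambda>i k. L $$ (i, \<alpha> ! k)) (\<lambda>k j. R $$ (\<beta> ! k, j))"
proof -
  have \<alpha>: "length \<alpha> = r" "set \<alpha> \<subseteq> {0..<m}" "sorted_wrt (<) \<alpha>"
    and \<beta>: "length \<beta> = r" "set \<beta> \<subseteq> {0..<n}" "distinct \<beta>"
    and L: "L \<in> Lgrp m (T_L m \<alpha>)" and R: "R \<in> Lgrp n (T_R \<beta>)"
    using assms unfolding allowed_def by auto
  have \<alpha>_less: "\<alpha> ! k < m" if "k < r" for k
    using \<alpha> that by (auto dest!: nth_mem)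
  have \<beta>_less: "\<beta> ! k < n" if "k < r" for k
    using \<beta> that by (auto dest!: nth_mem)
  note L_upper = Lgrp_entry_upper[OF L T_L_subset_P_set]
  note R_upper = Lgrp_entry_upper[OF R T_R_subset_P_set[OF \<beta>(2)]]
  show ?thesis
  proof
    fix k k' i j
    show "k < r \<Longrightarrow> \<alpha> ! k < m" by (rule \<alpha>_less)
    show "k < k' \<Longrightarrow> k' < r \<Longrightarrow> \<alpha> ! k < \<alpha> ! k'"
      using \<alpha> by (simp add: sorted_wrt_iff_nth_less)
    show "k < r \<Longrightarrow> \<beta> ! k < n" by (rule \<beta>_less)
    show "k < r \<Longrightarrow> L $$ (\<alpha> ! k, \<alpha> ! k) = 1"
      using L_upper \<alpha>_less by simp
    show "k < r \<Longrightarrow> i < \<alpha> ! k \<Longrightarrow> L $$ (i, \<alpha> ! k) = 0"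
      using L_upper \<alpha>_less by simp
    show "k < r \<Longrightarrow> R $$ (\<beta> ! k, \<beta> ! k) = 1"
      using R_upper \<beta>_less by simp
    show "k < r \<Longrightarrow> \<beta> ! k < j \<Longrightarrow> j < n \<Longrightarrow> R $$ (\<beta> ! k, j) = 0"
      using R_upper by simp
    show "k' < k \<Longrightarrow> k < r \<Longrightarrow> R $$ (\<beta> ! k, \<beta> ! k') = 0"
      using Lgrp_entry_notin[OF R] T_R_earlier_notin[OF \<beta>(3)] \<beta>_less \<beta>
      by (simp add: nth_eq_iff_index_eq)
  qed
qed

theorem theorem4:
  fixes m n r r' :: nat and \<alpha> \<beta> \<alpha>' \<beta>' :: "nat list" and L R L' R' :: "bit mat"
  assumes "allowed m n r \<alpha> \<beta> L R"
    and "allowed m n r' \<alpha>' \<beta>' L' R'"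
    and "L * Pi_mat m n \<alpha> \<beta> * R = L' * Pi_mat m n \<alpha>' \<beta>' * R'"
  shows "(r, \<alpha>, \<beta>, L, R) = (r', \<alpha>', \<beta>', L', R')"
proof -
  note E = allowed_echelon_sum[OF assms(1)] and E' = allowed_echelon_sum[OF assms(2)]
  have \<alpha>\<beta>: "length \<alpha> = r" "length \<beta> = r" "set \<alpha> \<subseteq> {0..<m}" "set \<beta> \<subseteq> {0..<n}"
      "length \<alpha>' = r'" "length \<beta>' = r'" "set \<alpha>' \<subseteq> {0..<m}" "set \<beta>' \<subseteq> {0..<n}"
    and LR: "L \<in> Lgrp m (T_L m \<alpha>)" "R \<in> Lgrp n (T_R \<beta>)"
      "L' \<in> Lgrp m (T_L m \<alpha>')" "R' \<in> Lgrp n (T_R \<beta>')"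
    using assms(1,2) unfolding allowed_def by auto
  have "(\<Sum>k<r. L $$ (i, \<alpha> ! k) * R $$ (\<beta> ! k, j))
      = (\<Sum>k<r'. L' $$ (i, \<alpha>' ! k) * R' $$ (\<beta>' ! k, j))"
    if "i < m" "j < n" for i j
    using mult_Pi_mat_mult_entry[OF Lgrp_carrier[OF LR(1)] Lgrp_carrier[OF LR(2)] that, of \<beta> \<alpha>]
      mult_Pi_mat_mult_entry[OF Lgrp_carrier[OF LR(3)] Lgrp_carrier[OF LR(4)] that, of \<beta>' \<alpha>']
      \<alpha>\<beta> assms(3)
    by simp
  note same = echelon_sum_unique[OF E E' this]
  have "\<alpha> = \<alpha>'" "\<beta> = \<beta>'"
    using same \<alpha>\<beta> by (auto intro: nth_equalityI)
  moreover have "L = L'"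
    using LR(1,3) same \<alpha>\<beta>(1) \<open>\<alpha> = \<alpha>'\<close>
    by (intro Lgrp_eqI[of L m "T_L m \<alpha>"]) (auto simp: T_L_def in_set_conv_nth)
  moreover have "R = R'"
    using LR(2,4) same \<alpha>\<beta>(2) \<open>\<beta> = \<beta>'\<close>
    by (intro Lgrp_eqI[of R n "T_R \<beta>"]) (auto simp: T_R_def)
  ultimately show ?thesis
    using same(1) by simp
qed

end
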